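(* Let $G$ be an execution graph satisfying $\mathit{BE}(G)$, $T$ a thread, $q$ an iteration index with $\mathit{WI}_G^T(q)$, and $m\le\mathit{len}_G^T(q)$. Write $a=\mathit{start}_G^T(q)+m$ and $b=\mathit{start}_G^T(q+1)+m$. Then: (1) $e_G^T(a)=e_G^T(b)$; (2) $v_G^T(a)=v_G^T(b)$; (3) $k_G^T(a)=k_G^T(b)$; (4) for every register $r$ with $\sigma_G^T(a)(r)\neq\sigma_G^T(b)(r)$ there is $u\in[\mathit{start}_G^T(q):\mathit{end}_G^T(q)]$ with $r\in\mathit{vis}_G^T(u,b)$.
   Context: Programs. There are finite sets $\mathit{Register}$, $\mathit{Value}$, $\mathit{Location}$; $\mathit{State}=\mathit{Register}\to\mathit{Value}$; an update is a partial map $\mathit{Register}\rightharpoonup\mathit{Value}$, and $(\sigma\ll\mu)(r)=\mu(r)$ if $r\in\mathrm{Dom}(\mu)$, else $\sigma(r)$. Events are reads $R^m(x)$, writes $W^m(x,v)$, fences $F^m$, error $E$. A program consists of finitely many threads $T$, each with a finite statement sequence $P_T(0),\dots,P_T(|P_T|-1)$. A statement is $\mathtt{step}(\epsilon,\delta)$ with $\epsilon:\mathit{State}\to\mathit{Event}$, $\delta:\mathit{State}\times(\mathit{Value}\cup\{\bot\})\to\mathit{Update}$, or $\mathtt{await}(n,\kappa)$ with $n\in\mathbb N$, $\kappa:\mathit{State}\to\{0,1\}$. Syntactic restriction: if $P_T(k)=\mathtt{await}(n,\cdot)$ then $n\le k$ and no $P_T(k')$ with $k'\in[k-n:k)$ is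 an await. ($[a:b)=\{a,\dots,b-1\}$, $[a:b]=\{a,\dots,b\}$.) An execution graph $G$ has a set $G.\mathrm E$ of triples $\langle T,t,e\rangle$ and a partial reads-from map $G.\mathrm{rf}$ from reads to writes. Thread-local semantics: $k_G^T(0)=0$, $\sigma_G^T(0)$ fixed; if $k_G^T(t)\ge|P_T|$ or no triple $\langle T,t,\cdot\rangle$ is in $G.\mathrm E$, execution stops ($N_G^T=t$). Otherwise with $S=P_T(k_G^T(t))$: $e_G^T(t)=\epsilon(\sigma_G^T(t))$ for $S=\mathtt{step}(\epsilon,\cdot)$, $F^{\mathrm{rlx}}$ for an await; $v_G^T(t)$ is the value of the write that $G.\mathrm{rf}$ assigns to $\langle T,t,e_G^T(t)\rangle$ if this is a read with defined rf, else $\bot$. For a step: $k_G^T(t+1)=k_G^T(t)+1$; if $e_G^T(t)$ is a read with $v_G^T(t)=\bot$ then $N_G^T=t+1$, $\sigma_G^T(t+1)=\sigma_G^T(t)$, else $\sigma_G^T(t+1)=\sigma_G^T(t)\ll\delta(\sigma_G^T(t),v_G^T(t))$. For $\mathtt{await}(n,\kappa)$: $\sigma_G^T(t+1)=\sigma_G^T(t)$ and $k_G^T(t+1)=k_G^T(t)+1$ if $\kappa(\sigma_G^T(t))=0$, else $k_G^T(t)-n$. Awaits: $\mathit{end}_G^T(0)<\mathit{end}_G^T(1)<\cdots$ enumerate the steps $t$ at which $P_T(k_G^T(t))$ is an await; $\mathit{len}_G^T(q)=n$ where $P_T(k_G^T(\mathit{end}_G^T(q)))=\mathtt{await}(n,\kappa)$;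 $\mathit{start}_G^T(q)=\mathit{end}_G^T(q)-\mathit{len}_G^T(q)$; $\mathit{fail}_G^T(q)$ iff $\kappa(\sigma_G^T(\mathit{end}_G^T(q)))=1$. $\mathit{WI}_G^T(q)$ holds iff $\mathit{fail}_G^T(q)$ and for every $m\le\mathit{len}_G^T(q)$ such that $e_G^T(\mathit{start}_G^T(q)+m)$ is a read, the events of steps $\mathit{start}_G^T(q)+m$ and $\mathit{start}_G^T(q+1)+m$ of $T$ are mapped by $G.\mathrm{rf}$ to the same write. Bounded effect. $\delta_G^T(t)=\delta(\sigma_G^T(t),v_G^T(t))$ if $P_T(k_G^T(t))=\mathtt{step}(\cdot,\delta)$ and not ($e_G^T(t)$ is a read and $v_G^T(t)=\bot$); otherwise the empty update. $\mathit{vis}_G^T(t,u)=\mathrm{Dom}(\delta_G^T(t))\setminus\bigcup_{t<u'<u}\mathrm{Dom}(\delta_G^T(u'))$. $F(\mathtt{step}(\epsilon,\delta))=\{\epsilon,\delta\}$, $F(\mathtt{await}(n,\kappa))=\{\kappa\}$. A function $f$ depends on $R\subseteq\mathit{Register}$ iff there are states $\sigma,\sigma'$ with $\sigma(r)=\sigma'(r)$ for all $r\notin R$ and $f(\sigma)\neq f(\sigma')$ (for $f=\delta$: $\delta(\sigma,v)\neq\delta(\sigma',v)$ for some $v$). Step $t$ of $T$ register-reads-from to step $u$ ($t\to_{\mathrm{rrf}}u$) iff $u\ge t$ and some $f\in F(P_T(k_G^T(u)))$ depends on $\mathit{vis}_G^T(t,u)$. $\mathit{BE}(G)$ holds iff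 for all threads $T$, all $q$ with $\mathit{fail}_G^T(q)$ and all $t\in[\mathit{start}_G^T(q):\mathit{end}_G^T(q))$: $e_G^T(t)$ is not a write, and $t\to_{\mathrm{rrf}}u$ implies $u\in[\mathit{start}_G^T(q):\mathit{end}_G^T(q))$. *)

theory Defs
  imports Main
begin

text \<open>Access modes (they play no role in the lemma; await steps emit a relaxed fence).\<close>
datatype mode = NA | Rlx | Acq | Rel | AcqRel | SC

datatype ('l, 'v) event =
    Read mode 'l
  | Write mode 'l 'v
  | Fence mode
  | Err

fun is_read :: "('l, 'v) event \<Rightarrow> bool" where
  "is_read (Read _ _) = True" | "is_read _ = False"

fun is_write :: "('l, 'v) event \<Rightarrow> bool" where
  "is_write (Write _ _ _) = True" | "is_write _ = False"

type_synonym ('r, 'v) state = "'r \<Rightarrow> 'v"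
type_synonym ('r, 'v) update = "'r \<rightharpoonup> 'v"

definition upd :: "('r, 'v) state \<Rightarrow> ('r, 'v) update \<Rightarrow> ('r, 'v) state" where
  "upd \<sigma> \<mu> = (\<lambda>r. case \<mu> r of Some v \<Rightarrow> v | None \<Rightarrow> \<sigma> r)"

text \<open>step(eps, delta) and await(n, kappa); the value argument None stands for bottom,
  and kappa returning True stands for 1.\<close>
datatype ('r, 'v, 'l) stmt =
    Step "('r, 'v) state \<Rightarrow> ('l, 'v) event" "('r, 'v) state \<Rightarrow> 'v option \<Rightarrow> ('r, 'v) update"
  | Await nat "('r, 'v) state \<Rightarrow> bool"

fun is_await :: "('r, 'v, 'l) stmt \<Rightarrow> bool" where
  "is_await (Await _ _) = True" | "is_await _ = False"

type_synonym ('t, 'r, 'v, 'l) prog = "'t \<Rightarrow> ('r, 'v, 'l) stmt list"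

definition wf_prog :: "('t, 'r, 'v, 'l) prog \<Rightarrow> bool" where
  "wf_prog P \<longleftrightarrow> (\<forall>T k n \<kappa>. k < length (P T) \<and> P T ! k = Await n \<kappa> \<longrightarrow>
       n \<le> k \<and> (\<forall>k' \<in> {k - n..<k}. \<not> is_await (P T ! k')))"

type_synonym ('t, 'l, 'v) gevent = "'t \<times> nat \<times> ('l, 'v) event"

record ('t, 'l, 'v) graph =
  E  :: "('t, 'l, 'v) gevent set"
  rf :: "('t, 'l, 'v) gevent \<rightharpoonup> ('t, 'l, 'v) gevent"

definition wf_graph :: "('t, 'l, 'v) graph \<Rightarrow> bool" where
  "wf_graph G \<longleftrightarrow> (\<forall>x y. rf G x = Some y \<longrightarrow>
      x \<in> E G \<and> is_read (snd (snd x)) \<and> y \<in> E G \<and> is_write (snd (snd y)))"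

fun wval :: "('t, 'l, 'v) gevent \<Rightarrow> 'v option" where
  "wval (_, _, Write _ _ v) = Some v" | "wval _ = None"

definition readval :: "('t, 'l, 'v) graph \<Rightarrow> 't \<Rightarrow> nat \<Rightarrow> ('l, 'v) event \<Rightarrow> 'v option" where
  "readval G T t e = (if is_read e then Option.bind (rf G (T, t, e)) wval else None)"

text \<open>conf P s0 G T t = (k(t), sigma(t), ok) where ok says that execution has not
  stopped before reaching step t (i.e. N > t is still possible).  Once stopped the
  configuration is frozen; only steps with runs t (i.e. t < N) are meaningful.\<close>
primrec conf :: "('t, 'r, 'v, 'l) prog \<Rightarrow> ('t \<Rightarrow> ('r, 'v) state) \<Rightarrow> ('t, 'l, 'v) graph
                  \<Rightarrow> 't \<Rightarrow> nat \<Rightarrow> nat \<times> ('r, 'v) state \<times> bool" where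
  "conf P s0 G T 0 = (0, s0 T, True)"
| "conf P s0 G T (Suc t) =
    (case conf P s0 G T t of (k, \<sigma>, ok) \<Rightarrow>
      if ok \<and> k < length (P T) \<and> (\<exists>e. (T, t, e) \<in> E G) then
        (case P T ! k of
           Step \<epsilon> \<delta> \<Rightarrow>
             (let e = \<epsilon> \<sigma>; v = readval G T t e in
               if is_read e \<and> v = None then (Suc k, \<sigma>, False)
               else (Suc k, upd \<sigma> (\<delta> \<sigma> v), True))
         | Await n \<kappa> \<Rightarrow> (if \<kappa> \<sigma> then k - n else Suc k, \<sigma>, True))
      else (k, \<sigma>, False))"

definition kG :: "('t, 'r, 'v, 'l) prog \<Rightarrow> ('t \<Rightarrow> ('r, 'v) state) \<Rightarrow> ('t, 'l, 'v) graph
                  \<Rightarrow> 't \<Rightarrow> nat \<Rightarrow> nat" where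
  "kG P s0 G T t = fst (conf P s0 G T t)"

definition sigmaG :: "('t, 'r, 'v, 'l) prog \<Rightarrow> ('t \<Rightarrow> ('r, 'v) state) \<Rightarrow> ('t, 'l, 'v) graph
                  \<Rightarrow> 't \<Rightarrow> nat \<Rightarrow> ('r, 'v) state" where
  "sigmaG P s0 G T t = fst (snd (conf P s0 G T t))"

text \<open>Step t of thread T is executed, i.e. t < N_G^T.\<close>
definition runs :: "('t, 'r, 'v, 'l) prog \<Rightarrow> ('t \<Rightarrow> ('r, 'v) state) \<Rightarrow> ('t, 'l, 'v) graph
                  \<Rightarrow> 't \<Rightarrow> nat \<Rightarrow> bool" where
  "runs P s0 G T t \<longleftrightarrow> snd (snd (conf P s0 G T t)) \<and> kG P s0 G T t < length (P T)
                       \<and> (\<exists>e. (T, t, e) \<in> E G)"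

definition stmtG :: "('t, 'r, 'v, 'l) prog \<Rightarrow> ('t \<Rightarrow> ('r, 'v) state) \<Rightarrow> ('t, 'l, 'v) graph
                  \<Rightarrow> 't \<Rightarrow> nat \<Rightarrow> ('r, 'v, 'l) stmt" where
  "stmtG P s0 G T t = P T ! kG P s0 G T t"

definition eG :: "('t, 'r, 'v, 'l) prog \<Rightarrow> ('t \<Rightarrow> ('r, 'v) state) \<Rightarrow> ('t, 'l, 'v) graph
                  \<Rightarrow> 't \<Rightarrow> nat \<Rightarrow> ('l, 'v) event" where
  "eG P s0 G T t = (case stmtG P s0 G T t of
                      Step \<epsilon> \<delta> \<Rightarrow> \<epsilon> (sigmaG P s0 G T t)
                    | Await n \<kappa> \<Rightarrow> Fence Rlx)"

definition vG :: "('t, 'r, 'v, 'l) prog \<Rightarrow> ('t \<Rightarrow> ('r, 'v) state) \<Rightarrow> ('t, 'l, 'v) graph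
                  \<Rightarrow> 't \<Rightarrow> nat \<Rightarrow> 'v option" where
  "vG P s0 G T t = readval G T t (eG P s0 G T t)"

definition await_steps :: "('t, 'r, 'v, 'l) prog \<Rightarrow> ('t \<Rightarrow> ('r, 'v) state) \<Rightarrow> ('t, 'l, 'v) graph
                  \<Rightarrow> 't \<Rightarrow> nat set" where
  "await_steps P s0 G T = {t. runs P s0 G T t \<and> is_await (stmtG P s0 G T t)}"

text \<open>t is end(q): the q-th (0-based) await step in increasing order.\<close>
definition is_end :: "('t, 'r, 'v, 'l) prog \<Rightarrow> ('t \<Rightarrow> ('r, 'v) state) \<Rightarrow> ('t, 'l, 'v) graph
                  \<Rightarrow> 't \<Rightarrow> nat \<Rightarrow> nat \<Rightarrow> bool" where
  "is_end P s0 G T q t \<longleftrightarrow> t \<in> await_steps P s0 G T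
       \<and> card {u \<in> await_steps P s0 G T. u < t} = q"

definition has_end :: "('t, 'r, 'v, 'l) prog \<Rightarrow> ('t \<Rightarrow> ('r, 'v) state) \<Rightarrow> ('t, 'l, 'v) graph
                  \<Rightarrow> 't \<Rightarrow> nat \<Rightarrow> bool" where
  "has_end P s0 G T q \<longleftrightarrow> (\<exists>t. is_end P s0 G T q t)"

definition endG :: "('t, 'r, 'v, 'l) prog \<Rightarrow> ('t \<Rightarrow> ('r, 'v) state) \<Rightarrow> ('t, 'l, 'v) graph
                  \<Rightarrow> 't \<Rightarrow> nat \<Rightarrow> nat" where
  "endG P s0 G T q = (THE t. is_end P s0 G T q t)"

fun await_len :: "('r, 'v, 'l) stmt \<Rightarrow> nat" where
  "await_len (Await n _) = n" | "await_len _ = 0"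

fun await_cond :: "('r, 'v, 'l) stmt \<Rightarrow> ('r, 'v) state \<Rightarrow> bool" where
  "await_cond (Await _ \<kappa>) \<sigma> = \<kappa> \<sigma>" | "await_cond _ _ = False"

definition lenG :: "('t, 'r, 'v, 'l) prog \<Rightarrow> ('t \<Rightarrow> ('r, 'v) state) \<Rightarrow> ('t, 'l, 'v) graph
                  \<Rightarrow> 't \<Rightarrow> nat \<Rightarrow> nat" where
  "lenG P s0 G T q = await_len (stmtG P s0 G T (endG P s0 G T q))"

definition startG :: "('t, 'r, 'v, 'l) prog \<Rightarrow> ('t \<Rightarrow> ('r, 'v) state) \<Rightarrow> ('t, 'l, 'v) graph
                  \<Rightarrow> 't \<Rightarrow> nat \<Rightarrow> nat" where
  "startG P s0 G T q = endG P s0 G T q - lenG P s0 G T q"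

definition failG :: "('t, 'r, 'v, 'l) prog \<Rightarrow> ('t \<Rightarrow> ('r, 'v) state) \<Rightarrow> ('t, 'l, 'v) graph
                  \<Rightarrow> 't \<Rightarrow> nat \<Rightarrow> bool" where
  "failG P s0 G T q \<longleftrightarrow> has_end P s0 G T q \<and>
      await_cond (stmtG P s0 G T (endG P s0 G T q)) (sigmaG P s0 G T (endG P s0 G T q))"

text \<open>WI(q); it refers to iteration q+1, whose existence is part of the notion.\<close>
definition WI :: "('t, 'r, 'v, 'l) prog \<Rightarrow> ('t \<Rightarrow> ('r, 'v) state) \<Rightarrow> ('t, 'l, 'v) graph
                  \<Rightarrow> 't \<Rightarrow> nat \<Rightarrow> bool" where
  "WI P s0 G T q \<longleftrightarrow> failG P s0 G T q \<and> has_end P s0 G T (Suc q) \<and>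
     (\<forall>m \<le> lenG P s0 G T q.
        is_read (eG P s0 G T (startG P s0 G T q + m)) \<longrightarrow>
          (let a = startG P s0 G T q + m; b = startG P s0 G T (Suc q) + m in
             rf G (T, a, eG P s0 G T a) \<noteq> None \<and>
             rf G (T, a, eG P s0 G T a) = rf G (T, b, eG P s0 G T b)))"

definition deltaG :: "('t, 'r, 'v, 'l) prog \<Rightarrow> ('t \<Rightarrow> ('r, 'v) state) \<Rightarrow> ('t, 'l, 'v) graph
                  \<Rightarrow> 't \<Rightarrow> nat \<Rightarrow> ('r, 'v) update" where
  "deltaG P s0 G T t = (case stmtG P s0 G T t of
      Step \<epsilon> \<delta> \<Rightarrow> (if is_read (eG P s0 G T t) \<and> vG P s0 G T t = None then Map.empty
                    else \<delta> (sigmaG P s0 G T t) (vG P s0 G T t))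
    | Await n \<kappa> \<Rightarrow> Map.empty)"

definition vis :: "('t, 'r, 'v, 'l) prog \<Rightarrow> ('t \<Rightarrow> ('r, 'v) state) \<Rightarrow> ('t, 'l, 'v) graph
                  \<Rightarrow> 't \<Rightarrow> nat \<Rightarrow> nat \<Rightarrow> 'r set" where
  "vis P s0 G T t u = dom (deltaG P s0 G T t) - (\<Union>u' \<in> {t<..<u}. dom (deltaG P s0 G T u'))"

definition depends :: "(('r, 'v) state \<Rightarrow> 'b) \<Rightarrow> 'r set \<Rightarrow> bool" where
  "depends f R \<longleftrightarrow> (\<exists>\<sigma> \<sigma>'. (\<forall>r. r \<notin> R \<longrightarrow> \<sigma> r = \<sigma>' r) \<and> f \<sigma> \<noteq> f \<sigma>')"

definition depends2 :: "(('r, 'v) state \<Rightarrow> 'v option \<Rightarrow> 'b) \<Rightarrow> 'r set \<Rightarrow> bool" where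
  "depends2 f R \<longleftrightarrow> (\<exists>\<sigma> \<sigma>' v. (\<forall>r. r \<notin> R \<longrightarrow> \<sigma> r = \<sigma>' r) \<and> f \<sigma> v \<noteq> f \<sigma>' v)"

fun stmt_depends :: "('r, 'v, 'l) stmt \<Rightarrow> 'r set \<Rightarrow> bool" where
  "stmt_depends (Step \<epsilon> \<delta>) R \<longleftrightarrow> depends \<epsilon> R \<or> depends2 \<delta> R"
| "stmt_depends (Await n \<kappa>) R \<longleftrightarrow> depends \<kappa> R"

definition rrf :: "('t, 'r, 'v, 'l) prog \<Rightarrow> ('t \<Rightarrow> ('r, 'v) state) \<Rightarrow> ('t, 'l, 'v) graph
                  \<Rightarrow> 't \<Rightarrow> nat \<Rightarrow> nat \<Rightarrow> bool" where
  "rrf P s0 G T t u \<longleftrightarrow> runs P s0 G T u \<and> t \<le> u \<and>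
      stmt_depends (stmtG P s0 G T u) (vis P s0 G T t u)"

definition BE :: "('t, 'r, 'v, 'l) prog \<Rightarrow> ('t \<Rightarrow> ('r, 'v) state) \<Rightarrow> ('t, 'l, 'v) graph \<Rightarrow> bool" where
  "BE P s0 G \<longleftrightarrow> (\<forall>T q. failG P s0 G T q \<longrightarrow>
     (\<forall>t \<in> {startG P s0 G T q..<endG P s0 G T q}.
        \<not> is_write (eG P s0 G T t) \<and>
        (\<forall>u. rrf P s0 G T t u \<longrightarrow> u \<in> {startG P s0 G T q..<endG P s0 G T q})))"

end

(* A failed await at end(q) jumps back over its loop body, which by well-formedness contains
   no await; hence iteration q+1 starts at end(q)+1 and executes the same statements as
   iteration q, ending at the same await.  Run the two iterations in lockstep.  Invariant:
   a register on which the two states differ was last written inside iteration q, i.e. it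
   is in vis(u, b) for some u in [start(q), end(q)), where b is the current step of
   iteration q+1.  Bounded effect says that no statement after end(q) depends on such
   registers, so both steps emit the same event, read the same value (by WI) and perform
   the same update, which preserves the invariant. *)

theory Submission
  imports Defs
begin

lemma not_dependsD:
  "\<not> depends f R \<Longrightarrow> (\<And>r. r \<notin> R \<Longrightarrow> \<sigma> r = \<sigma>' r) \<Longrightarrow> f \<sigma> = f \<sigma>'"
  unfolding depends_def by blast

lemma not_depends2D:
  "\<not> depends2 f R \<Longrightarrow> (\<And>r. r \<notin> R \<Longrightarrow> \<sigma> r = \<sigma>' r) \<Longrightarrow> f \<sigma> v = f \<sigma>' v"
  unfolding depends2_def by blast

lemma not_depends_UN:
  assumes "finite I" and "\<And>i. i \<in> I \<Longrightarrow> \<not> depends f (V i)"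
  shows "\<not> depends f (\<Union>i\<in>I. V i)"
  using assms
proof (induction I rule: finite_induct)
  case empty
  then show ?case by (simp add: depends_def fun_eq_iff[symmetric])
next
  case (insert i I)
  show ?case
  proof
    assume "depends f (\<Union>j\<in>insert i I. V j)"
    then obtain \<sigma> \<sigma>' where agree: "\<And>r. r \<notin> V i \<union> (\<Union>j\<in>I. V j) \<Longrightarrow> \<sigma> r = \<sigma>' r"
      and differ: "f \<sigma> \<noteq> f \<sigma>'"
      by (auto simp: depends_def)
    define \<tau> where "\<tau> r = (if r \<in> V i then \<sigma>' r else \<sigma> r)" for r
    have "f \<sigma> = f \<tau>"
      by (rule not_dependsD[OF insert.prems[of i]]) (simp_all add: \<tau>_def)
    moreover have "f \<tau> = f \<sigma>'"
      by (rule not_dependsD[OF insert.IH]) (use insert.prems agree in \<open>auto simp: \<tau>_def\<close>)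
    ultimately show False using differ by simp
  qed
qed

lemma not_depends2_UN:
  assumes "finite I" and "\<And>i. i \<in> I \<Longrightarrow> \<not> depends2 f (V i)"
  shows "\<not> depends2 f (\<Union>i\<in>I. V i)"
proof -
  have "\<not> depends (\<lambda>\<sigma>. f \<sigma> v) (V i)" if "i \<in> I" for i v
    using assms(2)[OF that] unfolding depends_def depends2_def by blast
  then have "\<not> depends (\<lambda>\<sigma>. f \<sigma> v) (\<Union>i\<in>I. V i)" for v
    using not_depends_UN[OF assms(1)] by blast
  then show ?thesis by (auto simp: depends_def depends2_def)
qed

lemma not_stmt_depends_UN:
  assumes "finite I" and "\<And>i. i \<in> I \<Longrightarrow> \<not> stmt_depends S (V i)"
  shows "\<not> stmt_depends S (\<Union>i\<in>I. V i)"
proof (cases S)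
  case (Step \<epsilon> \<delta>)
  have "\<not> depends \<epsilon> (\<Union>i\<in>I. V i)"
    by (rule not_depends_UN[OF assms(1)]) (use assms(2) Step in simp)
  moreover have "\<not> depends2 \<delta> (\<Union>i\<in>I. V i)"
    by (rule not_depends2_UN[OF assms(1)]) (use assms(2) Step in simp)
  ultimately show ?thesis using Step by simp
next
  case (Await n \<kappa>)
  have "\<not> depends \<kappa> (\<Union>i\<in>I. V i)"
    by (rule not_depends_UN[OF assms(1)]) (use assms(2) Await in simp)
  then show ?thesis using Await by simp
qed

lemma wf_progD:
  assumes "wf_prog P" "k < length (P T)" "P T ! k = Await n \<kappa>"
  shows "n \<le> k" and "k' \<in> {k - n..<k} \<Longrightarrow> \<not> is_await (P T ! k')"
  using assms unfolding wf_prog_def by blast+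

lemma wf_prog_no_jump_into_loop:
  assumes wf: "wf_prog P"
    and k: "k < length (P T)" "P T ! k = Await n \<kappa>"
    and p: "p < length (P T)" "P T ! p = Await n' \<kappa>'"
  shows "p - n' \<notin> {k - n<..k}"
proof
  assume target: "p - n' \<in> {k - n<..k}"
  consider "p < k" | "p = k" | "k < p" by linarith
  then show False
  proof cases
    case 1
    then have "p \<in> {k - n..<k}" using target by auto
    from wf_progD(2)[OF wf k this] p(2) show False by simp
  next
    case 2
    then show False using target k(2) p(2) by auto
  next
    case 3
    then have "k \<in> {p - n'..<p}" using target by auto
    from wf_progD(2)[OF wf p this] k(2) show False by simp
  qed
qed

context
  fixes P :: "('t, 'r, 'v, 'l) prog" and s0 :: "'t \<Rightarrow> ('r, 'v) state"
    and G :: "('t, 'l, 'v) graph" and T :: 't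
begin

lemma runs_if_runs_Suc: "runs P s0 G T (Suc t) \<Longrightarrow> runs P s0 G T t"
  by (cases "conf P s0 G T t")
    (auto simp: runs_def kG_def Let_def split: if_splits stmt.splits)

lemma runs_mono:
  assumes "runs P s0 G T t'" and "t \<le> t'"
  shows "runs P s0 G T t"
  using assms(2,1) by (induction rule: inc_induct) (auto intro: runs_if_runs_Suc)

lemma conf_Suc_if_runs:
  assumes "runs P s0 G T t"
  shows "conf P s0 G T (Suc t) = (case stmtG P s0 G T t of
      Step \<epsilon> \<delta> \<Rightarrow> (Suc (kG P s0 G T t), upd (sigmaG P s0 G T t) (deltaG P s0 G T t),
                    \<not> (is_read (eG P s0 G T t) \<and> vG P s0 G T t = None))
    | Await n \<kappa> \<Rightarrow> (if \<kappa> (sigmaG P s0 G T t) then kG P s0 G T t - n else Suc (kG P s0 G T t),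
                    sigmaG P s0 G T t, True))"
proof -
  have "upd \<sigma> Map.empty = \<sigma>" for \<sigma> :: "('r, 'v) state" by (simp add: upd_def)
  then show ?thesis using assms
    by (cases "conf P s0 G T t") (auto simp: runs_def kG_def sigmaG_def stmtG_def
        eG_def deltaG_def vG_def Let_def split: stmt.splits)
qed

lemma kG_Suc_Step:
  "runs P s0 G T t \<Longrightarrow> stmtG P s0 G T t = Step \<epsilon> \<delta> \<Longrightarrow>
    kG P s0 G T (Suc t) = Suc (kG P s0 G T t)"
  using conf_Suc_if_runs[of t] by (simp add: kG_def)

lemma kG_Suc_Await:
  "runs P s0 G T t \<Longrightarrow> stmtG P s0 G T t = Await n \<kappa> \<Longrightarrow>
    kG P s0 G T (Suc t) = (if \<kappa> (sigmaG P s0 G T t) then kG P s0 G T t - n else Suc (kG P s0 G T t))"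
  using conf_Suc_if_runs[of t] by (simp add: kG_def)

lemma sigmaG_Suc:
  "runs P s0 G T t \<Longrightarrow> sigmaG P s0 G T (Suc t) = upd (sigmaG P s0 G T t) (deltaG P s0 G T t)"
  using conf_Suc_if_runs[of t] by (auto simp: sigmaG_def deltaG_def upd_def split: stmt.splits)

lemma vis_await: "is_await (stmtG P s0 G T t) \<Longrightarrow> vis P s0 G T t u = {}"
  by (cases "stmtG P s0 G T t") (simp_all add: vis_def deltaG_def)

lemma vis_Suc:
  assumes "r \<in> vis P s0 G T u t" "u < t" "r \<notin> dom (deltaG P s0 G T t)"
  shows "r \<in> vis P s0 G T u (Suc t)"
proof -
  have "{u<..<Suc t} = insert t {u<..<t}" using assms(2) by auto
  then show ?thesis using assms by (auto simp: vis_def)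
qed

lemma sigmaG_change_visible:
  assumes "t \<le> t'" and "\<And>x. x \<in> {t..<t'} \<Longrightarrow> runs P s0 G T x"
    and "sigmaG P s0 G T t' r \<noteq> sigmaG P s0 G T t r"
  shows "\<exists>u\<in>{t..<t'}. r \<in> vis P s0 G T u t'"
  using assms
proof (induction t' rule: nat_induct_at_least)
  case base
  then show ?case by simp
next
  case (Suc t')
  show ?case
  proof (cases "r \<in> dom (deltaG P s0 G T t')")
    case True
    then have "r \<in> vis P s0 G T t' (Suc t')" by (auto simp: vis_def)
    then show ?thesis using Suc.hyps by auto
  next
    case False
    then have "sigmaG P s0 G T (Suc t') r = sigmaG P s0 G T t' r"
      using Suc.hyps Suc.prems(1) by (simp add: sigmaG_Suc upd_def domIff)
    then obtain u where u: "u \<in> {t..<t'}" "r \<in> vis P s0 G T u t'"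
      using Suc by auto
    then have "r \<in> vis P s0 G T u (Suc t')" using vis_Suc False by simp
    then show ?thesis using u(1) by auto
  qed
qed

lemma wf_prog_executed_await:
  assumes "wf_prog P" "runs P s0 G T t" "stmtG P s0 G T t = Await n \<kappa>"
  shows "n \<le> kG P s0 G T t"
    and "k \<in> {kG P s0 G T t - n..<kG P s0 G T t} \<Longrightarrow> \<not> is_await (P T ! k)"
  using assms wf_progD[of P "kG P s0 G T t" T n \<kappa>] by (auto simp: runs_def stmtG_def)

lemma kG_Suc_inside_loop:
  assumes wf: "wf_prog P" and t: "runs P s0 G T t" "stmtG P s0 G T t = Await n \<kappa>"
    and u: "runs P s0 G T u"
    and inside: "kG P s0 G T (Suc u) \<in> {kG P s0 G T t - n<..kG P s0 G T t}"
  shows "kG P s0 G T (Suc u) = Suc (kG P s0 G T u)"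
proof (cases "stmtG P s0 G T u")
  case (Step \<epsilon> \<delta>)
  then show ?thesis using kG_Suc_Step[OF u] by simp
next
  case (Await n' \<kappa>')
  have "kG P s0 G T u - n' \<notin> {kG P s0 G T t - n<..kG P s0 G T t}"
    by (rule wf_prog_no_jump_into_loop[OF wf]) (use t u Await in \<open>simp_all add: runs_def stmtG_def\<close>)
  then show ?thesis using kG_Suc_Await[OF u Await] inside by (auto split: if_splits)
qed

lemma kG_before_await:
  assumes wf: "wf_prog P" and t: "runs P s0 G T t" "stmtG P s0 G T t = Await n \<kappa>"
  shows "j \<le> n \<Longrightarrow> j \<le> t \<and> kG P s0 G T (t - j) = kG P s0 G T t - j"
proof (induction j)
  case 0
  then show ?case by simp
next
  case (Suc j)
  then have j: "j < n" "j \<le> t" "kG P s0 G T (t - j) = kG P s0 G T t - j" by auto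
  have "n \<le> kG P s0 G T t" by (rule wf_prog_executed_await(1)[OF wf t])
  have "t - j \<noteq> 0"
  proof
    assume "t - j = 0"
    then have "kG P s0 G T t - j = 0" using j(3) by (simp add: kG_def)
    then show False using j(1) \<open>n \<le> kG P s0 G T t\<close> by simp
  qed
  define u where "u = t - Suc j"
  have Suc_u: "Suc u = t - j" using \<open>t - j \<noteq> 0\<close> by (simp add: u_def)
  have "runs P s0 G T u" using runs_mono[OF t(1)] by (simp add: u_def)
  moreover have "kG P s0 G T (Suc u) \<in> {kG P s0 G T t - n<..kG P s0 G T t}"
    using Suc_u j \<open>n \<le> kG P s0 G T t\<close> by auto
  ultimately have "kG P s0 G T (Suc u) = Suc (kG P s0 G T u)"
    by (rule kG_Suc_inside_loop[OF wf t])
  then show ?case using Suc_u j \<open>t - j \<noteq> 0\<close> by (simp add: u_def)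
qed

lemma kG_after_failed_await:
  assumes wf: "wf_prog P" and t: "runs P s0 G T t" "stmtG P s0 G T t = Await n \<kappa>"
    and fail: "\<kappa> (sigmaG P s0 G T t)"
  shows "i \<le> n \<Longrightarrow> runs P s0 G T (t + i) \<Longrightarrow>
    kG P s0 G T (Suc t + i) = kG P s0 G T t - n + i"
proof (induction i)
  case 0
  then show ?case using kG_Suc_Await[OF t] fail by simp
next
  case (Suc i)
  have IH: "kG P s0 G T (Suc t + i) = kG P s0 G T t - n + i"
    using Suc runs_mono[OF Suc.prems(2)] by simp
  have "kG P s0 G T t - n + i \<in> {kG P s0 G T t - n..<kG P s0 G T t}"
    using Suc.prems(1) wf_prog_executed_await(1)[OF wf t] by auto
  then have "\<not> is_await (P T ! (kG P s0 G T t - n + i))"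
    by (rule wf_prog_executed_await(2)[OF wf t])
  then obtain \<epsilon> \<delta> where "stmtG P s0 G T (Suc t + i) = Step \<epsilon> \<delta>"
    using IH by (cases "P T ! (kG P s0 G T t - n + i)") (auto simp: stmtG_def)
  then show ?case using kG_Suc_Step[of "Suc t + i"] IH Suc.prems(2) by simp
qed

lemma is_end_less:
  assumes "is_end P s0 G T q t" "is_end P s0 G T q' t'" "t < t'"
  shows "q < q'"
proof -
  have "insert t {u \<in> await_steps P s0 G T. u < t} \<subseteq> {u \<in> await_steps P s0 G T. u < t'}"
    using assms by (auto simp: is_end_def)
  then have "card (insert t {u \<in> await_steps P s0 G T. u < t})
      \<le> card {u \<in> await_steps P s0 G T. u < t'}"
    by (rule card_mono[rotated]) simp
  then show ?thesis using assms(1,2) by (simp add: is_end_def)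
qed

lemma is_end_unique: "is_end P s0 G T q t \<Longrightarrow> is_end P s0 G T q t' \<Longrightarrow> t = t'"
  using is_end_less[of q t q t'] is_end_less[of q t' q t] by (metis less_irrefl nat_neq_iff)

lemma endG_eqI: "is_end P s0 G T q t \<Longrightarrow> endG P s0 G T q = t"
  unfolding endG_def using is_end_unique by blast

lemma await_step_between_ends:
  assumes "is_end P s0 G T q t" "is_end P s0 G T q' t'" "t < s" "s < t'"
    and "s \<in> await_steps P s0 G T"
  shows "Suc q < q'"
proof -
  have "insert s (insert t {u \<in> await_steps P s0 G T. u < t})
      \<subseteq> {u \<in> await_steps P s0 G T. u < t'}"
    using assms by (auto simp: is_end_def)
  then have "card (insert s (insert t {u \<in> await_steps P s0 G T. u < t}))
      \<le> card {u \<in> await_steps P s0 G T. u < t'}"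
    by (rule card_mono[rotated]) simp
  then show ?thesis using assms by (simp add: is_end_def)
qed

lemma next_end_after_failed_await:
  assumes wf: "wf_prog P"
    and e: "is_end P s0 G T q t" and e': "is_end P s0 G T (Suc q) t'"
    and aw: "stmtG P s0 G T t = Await n \<kappa>" and fail: "\<kappa> (sigmaG P s0 G T t)"
  shows "t' = Suc t + n"
proof -
  have "t \<noteq> t'" using e e' by (auto simp: is_end_def)
  moreover have "\<not> t' < t" using is_end_less[OF e' e] by auto
  ultimately have "t < t'" by simp
  then obtain i where t'_eq: "t' = Suc t + i" using less_iff_Suc_add by blast
  have runs_before_t': "runs P s0 G T u" if "u \<le> t'" for u
    using e' runs_mono[OF _ that] by (simp add: is_end_def await_steps_def)
  have "runs P s0 G T t" using runs_before_t' t'_eq by simp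
  note kG_after = kG_after_failed_await[OF wf this aw fail]
  have "\<not> i < n"
  proof
    assume "i < n"
    then have "kG P s0 G T t' = kG P s0 G T t - n + i"
      using kG_after[of i] runs_before_t'[of "t + i"] \<open>i < n\<close> t'_eq by simp
    moreover have "kG P s0 G T t - n + i \<in> {kG P s0 G T t - n..<kG P s0 G T t}"
      using \<open>i < n\<close> wf_prog_executed_await(1)[OF wf \<open>runs P s0 G T t\<close> aw] by auto
    ultimately have "\<not> is_await (stmtG P s0 G T t')"
      using wf_prog_executed_await(2)[OF wf \<open>runs P s0 G T t\<close> aw] by (simp add: stmtG_def)
    then show False using e' by (simp add: is_end_def await_steps_def)
  qed
  moreover have "\<not> n < i"
  proof
    assume "n < i"
    then have "kG P s0 G T (Suc t + n) = kG P s0 G T t"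
      using kG_after[of n] runs_before_t'[of "t + n"] \<open>n < i\<close> t'_eq
        wf_prog_executed_await(1)[OF wf \<open>runs P s0 G T t\<close> aw] by simp
    then have "Suc t + n \<in> await_steps P s0 G T"
      using runs_before_t'[of "Suc t + n"] t'_eq \<open>n < i\<close> aw by (simp add: await_steps_def stmtG_def)
    with await_step_between_ends[OF e e', of "Suc t + n"] show False using \<open>n < i\<close> t'_eq by simp
  qed
  ultimately show ?thesis using t'_eq by simp
qed

lemma is_end_endG: "has_end P s0 G T q \<Longrightarrow> is_end P s0 G T q (endG P s0 G T q)"
  unfolding has_end_def using endG_eqI by blast

lemma runs_le_endG: "has_end P s0 G T q \<Longrightarrow> t \<le> endG P s0 G T q \<Longrightarrow> runs P s0 G T t"
  using is_end_endG runs_mono by (auto simp: is_end_def await_steps_def)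

lemma await_at_endG: "has_end P s0 G T q \<Longrightarrow> is_await (stmtG P s0 G T (endG P s0 G T q))"
  using is_end_endG by (auto simp: is_end_def await_steps_def)

lemma failed_iteration_layout:
  assumes wf: "wf_prog P" and fail: "failG P s0 G T q" and has_next: "has_end P s0 G T (Suc q)"
  shows "startG P s0 G T q + lenG P s0 G T q = endG P s0 G T q"
    and "startG P s0 G T (Suc q) = Suc (endG P s0 G T q)"
    and "endG P s0 G T (Suc q) = Suc (endG P s0 G T q) + lenG P s0 G T q"
    and "m \<le> lenG P s0 G T q \<Longrightarrow>
      kG P s0 G T (startG P s0 G T q + m) = kG P s0 G T (startG P s0 G T (Suc q) + m)"
proof -
  define t n where "t = endG P s0 G T q" and "n = lenG P s0 G T q"
  have e: "is_end P s0 G T q t" and e': "is_end P s0 G T (Suc q) (endG P s0 G T (Suc q))"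
    using fail has_next is_end_endG by (auto simp: failG_def t_def)
  have runs_t: "runs P s0 G T t" and "is_await (stmtG P s0 G T t)"
    using e by (auto simp: is_end_def await_steps_def)
  then obtain \<kappa> where aw: "stmtG P s0 G T t = Await n \<kappa>"
    by (cases "stmtG P s0 G T t") (auto simp: n_def lenG_def t_def)
  have \<kappa>: "\<kappa> (sigmaG P s0 G T t)" using fail aw by (simp add: failG_def t_def)
  have next_end: "endG P s0 G T (Suc q) = Suc t + n"
    by (rule next_end_after_failed_await[OF wf e e' aw \<kappa>])
  have "n \<le> kG P s0 G T t" by (rule wf_prog_executed_await(1)[OF wf runs_t aw])
  have "n \<le> t" using kG_before_await[OF wf runs_t aw, of n] by simp
  have k_before: "kG P s0 G T (t - n + m) = kG P s0 G T t - n + m" if "m \<le> n" for m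
    using kG_before_await[OF wf runs_t aw, of "n - m"] that \<open>n \<le> t\<close> \<open>n \<le> kG P s0 G T t\<close>
    by simp
  have k_after: "kG P s0 G T (Suc t + m) = kG P s0 G T t - n + m" if "m \<le> n" for m
    using kG_after_failed_await[OF wf runs_t aw \<kappa> that] runs_le_endG[OF has_next] next_end that
    by simp
  have "stmtG P s0 G T (Suc t + n) = Await n \<kappa>"
    using k_after[of n] aw \<open>n \<le> kG P s0 G T t\<close> by (simp add: stmtG_def)
  then have start_next: "startG P s0 G T (Suc q) = Suc t"
    using next_end by (simp add: startG_def lenG_def)
  have start: "startG P s0 G T q = t - n" by (simp add: startG_def t_def n_def)
  show "startG P s0 G T q + lenG P s0 G T q = endG P s0 G T q"
    using start \<open>n \<le> t\<close> by (simp add: t_def n_def)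
  show "startG P s0 G T (Suc q) = Suc (endG P s0 G T q)"
    using start_next by (simp add: t_def)
  show "endG P s0 G T (Suc q) = Suc (endG P s0 G T q) + lenG P s0 G T q"
    using next_end by (simp add: t_def n_def)
  show "kG P s0 G T (startG P s0 G T q + m) = kG P s0 G T (startG P s0 G T (Suc q) + m)"
    if "m \<le> lenG P s0 G T q"
    using that k_before k_after start start_next by (simp add: n_def)
qed

lemma sigmaG_change_visible_across_await:
  assumes "t \<le> t'" and "\<And>x. x \<in> {t..t'} \<Longrightarrow> runs P s0 G T x"
    and "is_await (stmtG P s0 G T t')"
    and "sigmaG P s0 G T t r \<noteq> sigmaG P s0 G T (Suc t') r"
  shows "\<exists>u\<in>{t..<t'}. r \<in> vis P s0 G T u (Suc t')"
proof -
  have "\<exists>u\<in>{t..<Suc t'}. r \<in> vis P s0 G T u (Suc t')"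
    by (rule sigmaG_change_visible) (use assms in auto)
  then obtain u where u: "u \<in> {t..<Suc t'}" "r \<in> vis P s0 G T u (Suc t')" ..
  moreover have "u \<noteq> t'" using u(2) vis_await[OF assms(3)] by auto
  ultimately show ?thesis by auto
qed

lemma step_effects_agree:
  assumes same: "stmtG P s0 G T a = stmtG P s0 G T b"
    and agree: "\<And>r. r \<notin> R \<Longrightarrow> sigmaG P s0 G T a r = sigmaG P s0 G T b r"
    and indep: "\<not> stmt_depends (stmtG P s0 G T b) R"
    and rf_eq: "is_read (eG P s0 G T a) \<Longrightarrow>
      rf G (T, a, eG P s0 G T a) = rf G (T, b, eG P s0 G T b)"
  shows "eG P s0 G T a = eG P s0 G T b \<and> vG P s0 G T a = vG P s0 G T b
    \<and> deltaG P s0 G T a = deltaG P s0 G T b"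
proof (cases "stmtG P s0 G T b")
  case (Step \<epsilon> \<delta>)
  have "\<not> depends \<epsilon> R" and "\<not> depends2 \<delta> R" using indep Step by simp_all
  have "\<epsilon> (sigmaG P s0 G T a) = \<epsilon> (sigmaG P s0 G T b)"
    using not_dependsD[OF \<open>\<not> depends \<epsilon> R\<close> agree] .
  then have e: "eG P s0 G T a = eG P s0 G T b" using same Step by (simp add: eG_def)
  then have v: "vG P s0 G T a = vG P s0 G T b" using rf_eq by (simp add: vG_def readval_def)
  have "\<delta> (sigmaG P s0 G T a) v = \<delta> (sigmaG P s0 G T b) v" for v
    using not_depends2D[OF \<open>\<not> depends2 \<delta> R\<close> agree] .
  then have "deltaG P s0 G T a = deltaG P s0 G T b" using same Step e v by (simp add: deltaG_def)
  with e v show ?thesis by simp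
next
  case Await
  then show ?thesis using same by (simp add: eG_def vG_def readval_def deltaG_def)
qed

lemma differing_register_visible_Suc:
  assumes "runs P s0 G T a" and "runs P s0 G T b"
    and same_update: "deltaG P s0 G T a = deltaG P s0 G T b"
    and U_before: "\<And>u. u \<in> U \<Longrightarrow> u < b"
    and visible: "\<And>r. sigmaG P s0 G T a r \<noteq> sigmaG P s0 G T b r \<Longrightarrow>
      \<exists>u\<in>U. r \<in> vis P s0 G T u b"
    and differ: "sigmaG P s0 G T (Suc a) r \<noteq> sigmaG P s0 G T (Suc b) r"
  shows "\<exists>u\<in>U. r \<in> vis P s0 G T u (Suc b)"
proof -
  have r: "r \<notin> dom (deltaG P s0 G T b)"
    and "sigmaG P s0 G T a r \<noteq> sigmaG P s0 G T b r"
    using differ same_update sigmaG_Suc[OF assms(1)] sigmaG_Suc[OF assms(2)]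
    by (auto simp: upd_def split: option.splits)
  then obtain u where u: "u \<in> U" "r \<in> vis P s0 G T u b" using visible by blast
  then have "r \<in> vis P s0 G T u (Suc b)" using vis_Suc[OF u(2) U_before r] by simp
  with u(1) show ?thesis ..
qed

lemma shifted_run_agrees:
  assumes "finite U" and U_before: "\<And>u. u \<in> U \<Longrightarrow> u < s'"
    and runs: "\<And>m. m < n \<Longrightarrow> runs P s0 G T (s + m) \<and> runs P s0 G T (s' + m)"
    and same: "\<And>m. m \<le> n \<Longrightarrow> stmtG P s0 G T (s + m) = stmtG P s0 G T (s' + m)"
    and indep: "\<And>m u. m \<le> n \<Longrightarrow> u \<in> U \<Longrightarrow>
      \<not> stmt_depends (stmtG P s0 G T (s' + m)) (vis P s0 G T u (s' + m))"
    and rf_eq: "\<And>m. m \<le> n \<Longrightarrow> is_read (eG P s0 G T (s + m)) \<Longrightarrow>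
      rf G (T, s + m, eG P s0 G T (s + m)) = rf G (T, s' + m, eG P s0 G T (s' + m))"
    and init: "\<And>r. sigmaG P s0 G T s r \<noteq> sigmaG P s0 G T s' r \<Longrightarrow>
      \<exists>u\<in>U. r \<in> vis P s0 G T u s'"
    and "m \<le> n"
  shows "eG P s0 G T (s + m) = eG P s0 G T (s' + m) \<and> vG P s0 G T (s + m) = vG P s0 G T (s' + m)
    \<and> (\<forall>r. sigmaG P s0 G T (s + m) r \<noteq> sigmaG P s0 G T (s' + m) r \<longrightarrow>
          (\<exists>u\<in>U. r \<in> vis P s0 G T u (s' + m)))"
proof -
  define inv where "inv m \<longleftrightarrow> (\<forall>r. sigmaG P s0 G T (s + m) r \<noteq> sigmaG P s0 G T (s' + m) r
    \<longrightarrow> (\<exists>u\<in>U. r \<in> vis P s0 G T u (s' + m)))" for m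
  have agree: "eG P s0 G T (s + m) = eG P s0 G T (s' + m) \<and> vG P s0 G T (s + m) = vG P s0 G T (s' + m)
      \<and> deltaG P s0 G T (s + m) = deltaG P s0 G T (s' + m)"
    if "m \<le> n" and "inv m" for m
  proof (rule step_effects_agree[where R = "\<Union>u\<in>U. vis P s0 G T u (s' + m)"])
    show "stmtG P s0 G T (s + m) = stmtG P s0 G T (s' + m)" using same[OF that(1)] .
    show "sigmaG P s0 G T (s + m) r = sigmaG P s0 G T (s' + m) r"
      if "r \<notin> (\<Union>u\<in>U. vis P s0 G T u (s' + m))" for r
      using \<open>inv m\<close> that unfolding inv_def by blast
    show "\<not> stmt_depends (stmtG P s0 G T (s' + m)) (\<Union>u\<in>U. vis P s0 G T u (s' + m))"
      by (rule not_stmt_depends_UN[OF \<open>finite U\<close> indep[OF that(1)]])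
    show "rf G (T, s + m, eG P s0 G T (s + m)) = rf G (T, s' + m, eG P s0 G T (s' + m))"
      if "is_read (eG P s0 G T (s + m))"
      using rf_eq[OF \<open>m \<le> n\<close> that] .
  qed
  have "inv m" if "m \<le> n" for m
    using that
  proof (induction m)
    case 0
    then show ?case using init by (simp add: inv_def)
  next
    case (Suc m)
    then have "m < n" and "inv m" by auto
    show "inv (Suc m)" unfolding inv_def
    proof (intro allI impI)
      fix r
      assume "sigmaG P s0 G T (s + Suc m) r \<noteq> sigmaG P s0 G T (s' + Suc m) r"
      then have "\<exists>u\<in>U. r \<in> vis P s0 G T u (Suc (s' + m))"
        using differing_register_visible_Suc[of "s + m" "s' + m" U r] runs[OF \<open>m < n\<close>]
          agree[OF _ \<open>inv m\<close>] \<open>m < n\<close> U_before \<open>inv m\<close> unfolding inv_def by fastforce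
      then show "\<exists>u\<in>U. r \<in> vis P s0 G T u (s' + Suc m)" by simp
    qed
  qed
  then show ?thesis using agree[of m] \<open>m \<le> n\<close> unfolding inv_def by blast
qed

lemma BE_not_stmt_depends:
  assumes "BE P s0 G" and "failG P s0 G T q"
    and "u \<in> {startG P s0 G T q..<endG P s0 G T q}"
    and "runs P s0 G T t" and "endG P s0 G T q \<le> t"
  shows "\<not> stmt_depends (stmtG P s0 G T t) (vis P s0 G T u t)"
proof
  assume "stmt_depends (stmtG P s0 G T t) (vis P s0 G T u t)"
  then have "rrf P s0 G T u t" using assms(3-5) by (simp add: rrf_def)
  moreover have "\<forall>t'. rrf P s0 G T u t' \<longrightarrow> t' \<in> {startG P s0 G T q..<endG P s0 G T q}"
    using assms(1-3) unfolding BE_def by blast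
  ultimately show False using assms(5) by auto
qed

end

theorem lemma5:
  fixes P :: "('t::finite, 'r::finite, 'v::finite, 'l::finite) prog"
    and s0 :: "'t \<Rightarrow> ('r, 'v) state"
    and G :: "('t, 'l, 'v) graph"
    and T :: 't and q m :: nat
  assumes "wf_prog P" and "wf_graph G"
    and "BE P s0 G"
    and "WI P s0 G T q"
    and "m \<le> lenG P s0 G T q"
  defines "a \<equiv> startG P s0 G T q + m"
    and "b \<equiv> startG P s0 G T (Suc q) + m"
  shows "eG P s0 G T a = eG P s0 G T b \<and>
         vG P s0 G T a = vG P s0 G T b \<and>
         kG P s0 G T a = kG P s0 G T b \<and>
         (\<forall>r. sigmaG P s0 G T a r \<noteq> sigmaG P s0 G T b r \<longrightarrow>
           (\<exists>u \<in> {startG P s0 G T q..endG P s0 G T q}. r \<in> vis P s0 G T u b))"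
proof -
  have fail: "failG P s0 G T q" and has_next: "has_end P s0 G T (Suc q)"
    using assms(4) by (simp_all add: WI_def)
  have has_end: "has_end P s0 G T q" using fail by (simp add: failG_def)
  note layout = failed_iteration_layout[OF assms(1) fail has_next]
  note runs_next = runs_le_endG[OF has_next]
  let ?s = "startG P s0 G T q" and ?s' = "startG P s0 G T (Suc q)"
    and ?e = "endG P s0 G T q" and ?n = "lenG P s0 G T q"
  have "eG P s0 G T a = eG P s0 G T b \<and> vG P s0 G T a = vG P s0 G T b \<and>
      (\<forall>r. sigmaG P s0 G T a r \<noteq> sigmaG P s0 G T b r \<longrightarrow>
        (\<exists>u \<in> {?s..<?e}. r \<in> vis P s0 G T u b))"
    unfolding a_def b_def
  proof (rule shifted_run_agrees[OF _ _ _ _ _ _ _ assms(5)])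
    show "u < ?s'" if "u \<in> {?s..<?e}" for u using that layout(2) by simp
    show "runs P s0 G T (?s + m) \<and> runs P s0 G T (?s' + m)" if "m < ?n" for m
      using that layout(1-3) runs_next by simp
    show "stmtG P s0 G T (?s + m) = stmtG P s0 G T (?s' + m)" if "m \<le> ?n" for m
      using layout(4)[OF that] by (simp add: stmtG_def)
    show "\<not> stmt_depends (stmtG P s0 G T (?s' + m)) (vis P s0 G T u (?s' + m))"
      if "m \<le> ?n" and "u \<in> {?s..<?e}" for m u
      using BE_not_stmt_depends[OF assms(3) fail that(2)] that(1) layout(2,3) runs_next by simp
    show "rf G (T, ?s + m, eG P s0 G T (?s + m)) = rf G (T, ?s' + m, eG P s0 G T (?s' + m))"
      if "m \<le> ?n" and "is_read (eG P s0 G T (?s + m))" for m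
      using assms(4) that by (simp add: WI_def Let_def)
    show "\<exists>u \<in> {?s..<?e}. r \<in> vis P s0 G T u ?s'"
      if "sigmaG P s0 G T ?s r \<noteq> sigmaG P s0 G T ?s' r" for r
      unfolding layout(2) by (rule sigmaG_change_visible_across_await)
        (use that layout(1-3) runs_next await_at_endG[OF has_end] in auto)
  qed simp
  then show ?thesis using layout(4)[OF assms(5)] unfolding a_def b_def by fastforce
qed

end
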